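(* Let $\varepsilon\in[0,1)$ and $M_2>M_1\ge N>1$. Then there exists a linear map $\mathcal{L}$ on operators of the qubit $B$ such that $T(\mathcal{L}(|1\rangle\langle1|),|1\rangle\langle1|)\le\varepsilon$, $\mathcal{L}(\pi_{M_1})=\pi_N$ and $\mathcal{L}(\pi_{M_2})=\pi_N$ (i.e. the conversion $(|1\rangle\langle1|,\{\pi_{M_1},\pi_{M_2}\})\xrightarrow{\mathcal{L},\varepsilon}(|1\rangle\langle1|,\pi_N)$ is achievable by a Gibbs-preserving linear map) if and only if $\varepsilon\ge 1-1/N$.
   Context: $B$ is a qubit with orthonormal basis $\{|0\rangle,|1\rangle\}$; for $M>1$, $\pi_M=(1-\tfrac1M)|0\rangle\langle0|+\tfrac1M|1\rangle\langle1|$ is the Gibbs state of a battery of capacity $M$. $T(X,Y)=\tfrac12\|X-Y\|_1$. *)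

theory Defs
  imports "HOL-Analysis.Analysis"
begin

text \<open>Operators on the qubit B: complex 2x2 matrices, indexed by the type 2.
  Index 0 corresponds to the basis vector |0>, index 1 to |1>.\<close>

type_synonym qop = "complex^2^2"

definition ketbra :: "2 \<Rightarrow> qop" where
  "ketbra k = (\<chi> i j. if i = k \<and> j = k then 1 else 0)"

definition proj0 :: qop where "proj0 = ketbra 0"
definition proj1 :: qop where "proj1 = ketbra 1"

definition mscale :: "complex \<Rightarrow> qop \<Rightarrow> qop" where
  "mscale c A = (\<chi> i j. c * A $ i $ j)"

definition is_linear_map :: "(qop \<Rightarrow> qop) \<Rightarrow> bool" where
  "is_linear_map L \<longleftrightarrow> (\<forall>A B. L (A + B) = L A + L B) \<and> (\<forall>c A. L (mscale c A) = mscale c (L A))"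

definition adjoint_op :: "qop \<Rightarrow> qop" where
  "adjoint_op A = (\<chi> i j. cnj (A $ j $ i))"

definition psd :: "qop \<Rightarrow> bool" where
  "psd P \<longleftrightarrow> (\<forall>v::complex^2. let q = (\<Sum>i\<in>UNIV. cnj (v $ i) * (P *v v) $ i) in Im q = 0 \<and> Re q \<ge> 0)"

text \<open>Trace norm: trace of |A| = sqrt(A^* A), the unique psd square root.\<close>
definition trace_norm :: "qop \<Rightarrow> real" where
  "trace_norm A = (THE r. \<exists>P. psd P \<and> P ** P = adjoint_op A ** A \<and> r = Re (trace P))"

definition tdist :: "qop \<Rightarrow> qop \<Rightarrow> real" where
  "tdist X Y = trace_norm (X - Y) / 2"

definition gibbs :: "real \<Rightarrow> qop" where
  "gibbs M = mscale (complex_of_real (1 - 1 / M)) proj0 + mscale (complex_of_real (1 / M)) proj1"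

end

theory Submission
  imports Defs
begin

text \<open>The Gibbs states are affine in \<open>1/M\<close>:
  \<open>\<pi>\<^sub>M = |0\<rangle>\<langle>0| + (1/M) (|1\<rangle>\<langle>1| - |0\<rangle>\<langle>0|)\<close>. A linear map sending two Gibbs states with
  \<open>M\<^sub>1 \<noteq> M\<^sub>2\<close> to the same \<open>\<pi>\<^sub>N\<close> therefore annihilates \<open>|1\<rangle>\<langle>1| - |0\<rangle>\<langle>0|\<close>, so it sends
  \<open>|1\<rangle>\<langle>1|\<close> to \<open>\<pi>\<^sub>N\<close> itself, whose trace distance to \<open>|1\<rangle>\<langle>1|\<close> is \<open>1 - 1/N\<close>. Conversely the
  replacement map \<open>A \<mapsto> tr(A) \<pi>\<^sub>N\<close> achieves exactly this error.

  The trace norm of a diagonal operator \<open>diag(x, y)\<close> is \<open>|x| + |y|\<close>, because \<open>diag(|x|, |y|)\<close> is the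
  only positive semidefinite square root of \<open>diag(|x|\<^sup>2, |y|\<^sup>2)\<close>.\<close>

lemma two_eq_zero_2: "(2::2) = 0"
  by simp

lemma sum_2_zero_one: "sum f (UNIV::2 set) = f 0 + f 1"
  by (simp add: sum_2 two_eq_zero_2 add.commute)

lemma forall_2_zero_one: "(\<forall>i::2. P i) \<longleftrightarrow> P 0 \<and> P 1"
  by (simp add: forall_2 two_eq_zero_2 conj_commute)

lemma qop_eq_iff:
  "(A::qop) = B \<longleftrightarrow> A$0$0 = B$0$0 \<and> A$0$1 = B$0$1 \<and> A$1$0 = B$1$0 \<and> A$1$1 = B$1$1"
  by (auto simp: vec_eq_iff forall_2_zero_one)

definition diag_op :: "complex \<Rightarrow> complex \<Rightarrow> qop" where
  "diag_op x y = (\<chi> i j. if i = j then (if i = 0 then x else y) else 0)"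

lemma diag_op_nth [simp]:
  "diag_op x y $ 0 $ 0 = x" "diag_op x y $ 0 $ 1 = 0"
  "diag_op x y $ 1 $ 0 = 0" "diag_op x y $ 1 $ 1 = y"
  by (simp_all add: diag_op_def)

lemma diag_op_diff: "diag_op x y - diag_op x' y' = diag_op (x - x') (y - y')"
  by (simp add: qop_eq_iff)

lemma gibbs_eq_diag_op: "gibbs M = diag_op (1 - 1 / M) (1 / M)"
  by (simp add: qop_eq_iff gibbs_def mscale_def proj0_def proj1_def ketbra_def)

lemma proj1_eq_diag_op: "proj1 = diag_op 0 1"
  by (simp add: qop_eq_iff proj1_def ketbra_def)

lemma adjoint_op_mult_diag_op:
  "adjoint_op (diag_op x y) ** diag_op x y =
     diag_op (complex_of_real ((cmod x)\<^sup>2)) (complex_of_real ((cmod y)\<^sup>2))"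
  by (simp add: qop_eq_iff adjoint_op_def matrix_matrix_mult_def sum_2_zero_one
      mult.commute[of "cnj _"] complex_mult_cnj cmod_power2)

lemma psd_diag_op:
  assumes "0 \<le> a" "0 \<le> b"
  shows "psd (diag_op (complex_of_real a) (complex_of_real b))"
  unfolding psd_def Let_def
proof
  fix v :: "complex^2"
  have "(\<Sum>i\<in>UNIV. cnj (v $ i) * (diag_op a b *v v) $ i) =
        complex_of_real (a * (cmod (v$0))\<^sup>2 + b * (cmod (v$1))\<^sup>2)"
    by (simp add: sum_2_zero_one matrix_vector_mult_def algebra_simps complex_mult_cnj cmod_power2)
  then show "Im (\<Sum>i\<in>UNIV. cnj (v $ i) * (diag_op a b *v v) $ i) = 0 \<and>
             0 \<le> Re (\<Sum>i\<in>UNIV. cnj (v $ i) * (diag_op a b *v v) $ i)"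
    using assms by simp
qed

lemma psd_quadratic_form:
  fixes x y :: complex
  assumes "psd P"
  defines "q \<equiv> cnj x * (P$0$0 * x + P$0$1 * y) + cnj y * (P$1$0 * x + P$1$1 * y)"
  shows "Im q = 0" and "0 \<le> Re q"
proof -
  define v :: "complex^2" where "v = (\<chi> i. if i = 0 then x else y)"
  have "(\<Sum>i\<in>UNIV. cnj (v $ i) * (P *v v) $ i) = q"
    by (simp add: q_def sum_2_zero_one matrix_vector_mult_def v_def)
  with assms(1) show "Im q = 0" "0 \<le> Re q"
    unfolding psd_def Let_def by metis+
qed

lemma psd_zero_diagonal_imp_zero:
  assumes "psd P" "P$0$0 = 0" "P$1$1 = 0"
  shows "P = 0"
proof -
  \<comment> \<open>at \<open>(1, y)\<close> the form is \<open>P$0$1 y + P$1$0 cnj y\<close>; test \<open>y = \<plusminus>1, \<plusminus>\<i>\<close>\<close>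
  let ?q = "\<lambda>y. cnj 1 * (P$0$0 * 1 + P$0$1 * y) + cnj y * (P$1$0 * 1 + P$1$1 * y)"
  have "Re (?q y) \<ge> 0" for y using psd_quadratic_form(2)[OF assms(1)] .
  from this[of 1] this[of "-1"] this[of \<i>] this[of "-\<i>"]
  have "Re (P$0$1 + P$1$0) = 0" "Im (P$0$1 - P$1$0) = 0"
    using assms(2,3) by simp_all
  moreover from psd_quadratic_form(1)[OF assms(1), of 1 1] psd_quadratic_form(1)[OF assms(1), of 1 \<i>]
  have "Im (P$0$1 + P$1$0) = 0" "Re (P$0$1 - P$1$0) = 0"
    using assms(2,3) by simp_all
  ultimately show ?thesis
    using assms(2,3) by (simp add: qop_eq_iff complex_eq_iff)
qed

lemma real_nonneg_square_eq:
  assumes "Im p = 0" "0 \<le> Re p" "0 \<le> a" "p * p = complex_of_real (a\<^sup>2)"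
  shows "Re p = a"
proof -
  have "(Re p)\<^sup>2 = a\<^sup>2"
    using arg_cong[OF assms(4), of Re] assms(1) by (simp add: power2_eq_square)
  then show ?thesis
    using assms(2,3) by (simp add: power2_eq_iff_nonneg)
qed

lemma psd_sqrt_diag_op_trace:
  assumes P: "psd P" and a: "0 \<le> a" and b: "0 \<le> b"
    and PP: "P ** P = diag_op (complex_of_real (a\<^sup>2)) (complex_of_real (b\<^sup>2))"
  shows "Re (trace P) = a + b"
proof -
  have p: "Im (P$0$0) = 0" "0 \<le> Re (P$0$0)"
    using psd_quadratic_form[OF P, of 1 0] by simp_all
  have s: "Im (P$1$1) = 0" "0 \<le> Re (P$1$1)"
    using psd_quadratic_form[OF P, of 0 1] by simp_all
  have entries:
    "P$0$0 * P$0$0 + P$0$1 * P$1$0 = complex_of_real (a\<^sup>2)"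
    "P$0$1 * (P$0$0 + P$1$1) = 0"
    "P$1$0 * (P$0$0 + P$1$1) = 0"
    "P$1$0 * P$0$1 + P$1$1 * P$1$1 = complex_of_real (b\<^sup>2)"
    using PP unfolding qop_eq_iff
    by (simp_all add: matrix_matrix_mult_def sum_2_zero_one algebra_simps)
  have trace: "trace P = P$0$0 + P$1$1"
    by (simp add: trace_def sum_2_zero_one)
  show ?thesis
  proof (cases "P$0$0 + P$1$1 = 0")
    case True
    then have "P$0$0 = 0" "P$1$1 = 0"
      using p s by (auto simp: complex_eq_iff)
    then have "P = 0"
      using psd_zero_diagonal_imp_zero[OF P] by blast
    then have "a = 0" "b = 0"
      using entries(1,4) a b by simp_all
    then show ?thesis
      using trace True by simp
  next
    case False
    then have "P$0$1 = 0" "P$1$0 = 0"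
      using entries(2,3) by simp_all
    then have "Re (P$0$0) = a" "Re (P$1$1) = b"
      using real_nonneg_square_eq p s a b entries(1,4) by simp_all
    then show ?thesis
      using trace by simp
  qed
qed

lemma trace_norm_diag_op: "trace_norm (diag_op x y) = cmod x + cmod y"
  unfolding trace_norm_def adjoint_op_mult_diag_op
proof (rule the_equality)
  show "\<exists>P. psd P \<and> P ** P = diag_op ((cmod x)\<^sup>2) ((cmod y)\<^sup>2) \<and> cmod x + cmod y = Re (trace P)"
    by (intro exI[of _ "diag_op (cmod x) (cmod y)"] conjI psd_diag_op)
      (simp_all add: qop_eq_iff matrix_matrix_mult_def sum_2_zero_one trace_def power2_eq_square)
next
  show "r = cmod x + cmod y"
    if "\<exists>P. psd P \<and> P ** P = diag_op ((cmod x)\<^sup>2) ((cmod y)\<^sup>2) \<and> r = Re (trace P)" for r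
    using that psd_sqrt_diag_op_trace[of _ "cmod x" "cmod y"] by auto
qed

lemma tdist_gibbs_proj1: "tdist (gibbs N) proj1 = \<bar>1 - 1 / N\<bar>"
proof -
  have "gibbs N - proj1 = diag_op (of_real (1 - 1 / N)) (of_real (- (1 - 1 / N)))"
    by (simp add: gibbs_eq_diag_op proj1_eq_diag_op diag_op_diff)
  then show ?thesis
    by (simp add: tdist_def trace_norm_diag_op del: of_real_diff of_real_minus)
qed

lemma linear_map_gibbs:
  assumes "is_linear_map L"
  shows "L (gibbs M) =
    mscale (complex_of_real (1 - 1 / M)) (L proj0) + mscale (complex_of_real (1 / M)) (L proj1)"
  using assms unfolding is_linear_map_def gibbs_def by simp

lemma affine_comb_eq_twice_imp_eq_right:
  fixes x y z u w :: "'a::field"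
  assumes "u \<noteq> w" "(1 - u) * x + u * y = z" "(1 - w) * x + w * y = z"
  shows "z = y"
proof -
  have "(u - w) * (y - x) = ((1 - u) * x + u * y) - ((1 - w) * x + w * y)"
    by (simp add: algebra_simps)
  also have "\<dots> = 0"
    using assms(2,3) by simp
  finally have "x = y"
    using assms(1) by simp
  with assms(2) show ?thesis
    by (simp add: algebra_simps)
qed

lemma linear_map_eq_on_two_gibbs_imp_proj1:
  assumes L: "is_linear_map L" and "M1 \<noteq> M2"
    and "L (gibbs M1) = \<sigma>" "L (gibbs M2) = \<sigma>"
  shows "L proj1 = \<sigma>"
  unfolding vec_eq_iff
proof (intro allI)
  fix i j
  have entry: "(1 - complex_of_real (1 / M)) * L proj0 $ i $ j
      + complex_of_real (1 / M) * L proj1 $ i $ j = \<sigma> $ i $ j"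
    if "L (gibbs M) = \<sigma>" for M
    using linear_map_gibbs[OF L, of M] that by (simp add: mscale_def)
  have "complex_of_real (1 / M1) \<noteq> complex_of_real (1 / M2)"
    using \<open>M1 \<noteq> M2\<close> by simp
  then show "L proj1 $ i $ j = \<sigma> $ i $ j"
    using affine_comb_eq_twice_imp_eq_right entry assms(3,4) by metis
qed

definition replace_op :: "qop \<Rightarrow> qop \<Rightarrow> qop" where
  "replace_op \<sigma> A = mscale (trace A) \<sigma>"

lemma trace_mscale: "trace (mscale c A) = c * trace A"
  by (simp add: trace_def mscale_def sum_distrib_left)

lemma is_linear_map_replace_op: "is_linear_map (replace_op \<sigma>)"
  unfolding is_linear_map_def replace_op_def trace_add trace_mscale
  by (simp add: mscale_def vec_eq_iff algebra_simps)

lemma replace_op_trace_one: "trace A = 1 \<Longrightarrow> replace_op \<sigma> A = \<sigma>"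
  by (simp add: replace_op_def mscale_def vec_eq_iff)

lemma trace_diag_op: "trace (diag_op x y) = x + y"
  by (simp add: trace_def sum_2_zero_one)

lemma trace_gibbs: "trace (gibbs M) = 1"
  by (simp add: gibbs_eq_diag_op trace_diag_op)

lemma trace_proj1: "trace proj1 = 1"
  by (simp add: proj1_eq_diag_op trace_diag_op)

theorem corollary3:
  fixes \<epsilon> M1 M2 N :: real
  assumes "0 \<le> \<epsilon>" and "\<epsilon> < 1"
    and "N > 1" and "M1 \<ge> N" and "M2 > M1"
  shows "(\<exists>L. is_linear_map L \<and> tdist (L proj1) proj1 \<le> \<epsilon>
                \<and> L (gibbs M1) = gibbs N \<and> L (gibbs M2) = gibbs N)
         \<longleftrightarrow> \<epsilon> \<ge> 1 - 1 / N"
proof -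
  have error: "tdist (gibbs N) proj1 = 1 - 1 / N"
    using \<open>N > 1\<close> by (simp add: tdist_gibbs_proj1)
  show ?thesis
  proof
    assume "\<exists>L. is_linear_map L \<and> tdist (L proj1) proj1 \<le> \<epsilon>
                \<and> L (gibbs M1) = gibbs N \<and> L (gibbs M2) = gibbs N"
    then obtain L where "is_linear_map L" "tdist (L proj1) proj1 \<le> \<epsilon>"
      "L (gibbs M1) = gibbs N" "L (gibbs M2) = gibbs N"
      by blast
    moreover have "M1 \<noteq> M2"
      using \<open>M2 > M1\<close> by simp
    ultimately show "\<epsilon> \<ge> 1 - 1 / N"
      using linear_map_eq_on_two_gibbs_imp_proj1 error by metis
  next
    assume "\<epsilon> \<ge> 1 - 1 / N"
    then show "\<exists>L. is_linear_map L \<and> tdist (L proj1) proj1 \<le> \<epsilon>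
                \<and> L (gibbs M1) = gibbs N \<and> L (gibbs M2) = gibbs N"
      using is_linear_map_replace_op replace_op_trace_one trace_gibbs trace_proj1 error
      by metis
  qed
qed

end
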